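(* Let $\mathcal{H}_1$ and $\mathcal{H}_2$ be two hypertrees with the same vertex set $V$. Then $\mathcal{H}_1$ and $\mathcal{H}_2$ are equivalent if and only if they have the same basic sets. Moreover, if $\mathcal{H}_1$ and $\mathcal{H}_2$ have a common host tree $T$, then they are equivalent if and only if $I_{\mathcal{H}_1}(uv)=I_{\mathcal{H}_2}(uv)$ for every edge $uv$ of $T$.
   Context: A hypergraph $\mathcal{H}$ has a finite vertex set $V(\mathcal{H})$ and a finite family of nonempty subsets (edges). A host tree of $\mathcal{H}$ is a tree with vertex set $V(\mathcal{H})$ in which every edge induces a connected subgraph; $\mathcal{H}$ is a hypertree if it has one. Hypergraphs on the same vertex set are equivalent if they have the same host trees. For $V'\subseteq V(\mathcal{H})$, $I_\mathcal{H}(V')$ is the intersection of all edges of $\mathcal{H}$ containing $V'$, or $V(\mathcal{H})$ if none does; $I_\mathcal{H}(uv)=I_\mathcal{H}(\{u,v\})$. A union of sets is connected if the intersection graph of the sets is connected. $Comp(\mathcal{H})$ is the hypergraph without repeated edges on $V(\mathcal{H})$ whose edges are $V(\mathcal{H})$, all one-element subsets, and all proper subsets obtainable from edges of $\mathcal{H}$ by repeated nonempty intersections and connected unions. A basic set of $\mathcal{H}$ is an edge of $Comp(\mathcal{H})$ with more than one vertex that is not a connected union of strictly smaller edges of $Comp(\mathcal{H})$. *)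

theory Defs
  imports Main
begin

text \<open>A hypergraph is given by a finite vertex set V and an edge family E (a set of
  nonempty subsets of V). Graphs (trees) on V are given by their edge sets: sets of
  two-element subsets of V.\<close>

definition hypergraph :: "'a set \<Rightarrow> 'a set set \<Rightarrow> bool" where
  "hypergraph V E \<longleftrightarrow> finite V \<and> (\<forall>e\<in>E. e \<noteq> {} \<and> e \<subseteq> V)"

definition adj_in :: "'a set set \<Rightarrow> 'a set \<Rightarrow> ('a \<times> 'a) set" where
  "adj_in T S = {(u, v). u \<in> S \<and> v \<in> S \<and> {u, v} \<in> T}"

definition connected_in :: "'a set set \<Rightarrow> 'a set \<Rightarrow> bool" where
  "connected_in T S \<longleftrightarrow> (\<forall>u\<in>S. \<forall>v\<in>S. (u, v) \<in> (adj_in T S)\<^sup>*)"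

definition has_cycle :: "'a set set \<Rightarrow> bool" where
  "has_cycle T \<longleftrightarrow> (\<exists>cs. length cs \<ge> 3 \<and> distinct cs \<and>
      (\<forall>i < length cs. {cs ! i, cs ! ((i + 1) mod length cs)} \<in> T))"

definition is_tree :: "'a set \<Rightarrow> 'a set set \<Rightarrow> bool" where
  "is_tree V T \<longleftrightarrow> V \<noteq> {} \<and> T \<subseteq> {{u, v} | u v. u \<in> V \<and> v \<in> V \<and> u \<noteq> v}
     \<and> connected_in T V \<and> \<not> has_cycle T"

definition host_tree :: "'a set \<Rightarrow> 'a set set \<Rightarrow> 'a set set \<Rightarrow> bool" where
  "host_tree V E T \<longleftrightarrow> is_tree V T \<and> (\<forall>e\<in>E. connected_in T e)"

definition hypertree :: "'a set \<Rightarrow> 'a set set \<Rightarrow> bool" where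
  "hypertree V E \<longleftrightarrow> hypergraph V E \<and> (\<exists>T. host_tree V E T)"

definition equivalent :: "'a set \<Rightarrow> 'a set set \<Rightarrow> 'a set set \<Rightarrow> bool" where
  "equivalent V E1 E2 \<longleftrightarrow> (\<forall>T. host_tree V E1 T \<longleftrightarrow> host_tree V E2 T)"

definition I_H :: "'a set \<Rightarrow> 'a set set \<Rightarrow> 'a set \<Rightarrow> 'a set" where
  "I_H V E V' = (if {e \<in> E. V' \<subseteq> e} = {} then V else \<Inter> {e \<in> E. V' \<subseteq> e})"

definition int_graph_connected :: "'a set set \<Rightarrow> bool" where
  "int_graph_connected F \<longleftrightarrow>
     (\<forall>A\<in>F. \<forall>B\<in>F. (A, B) \<in> {(X, Y). X \<in> F \<and> Y \<in> F \<and> X \<inter> Y \<noteq> {}}\<^sup>*)"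

definition connected_union_of :: "'a set set \<Rightarrow> 'a set \<Rightarrow> bool" where
  "connected_union_of F S \<longleftrightarrow> F \<noteq> {} \<and> finite F \<and> int_graph_connected F \<and> \<Union> F = S"

inductive_set generated :: "'a set set \<Rightarrow> 'a set set" for E where
  edge: "e \<in> E \<Longrightarrow> e \<in> generated E"
| inter: "A \<in> generated E \<Longrightarrow> B \<in> generated E \<Longrightarrow> A \<inter> B \<noteq> {} \<Longrightarrow> A \<inter> B \<in> generated E"
| union: "(\<And>X. X \<in> F \<Longrightarrow> X \<in> generated E) \<Longrightarrow> connected_union_of F S \<Longrightarrow> S \<in> generated E"

definition Comp :: "'a set \<Rightarrow> 'a set set \<Rightarrow> 'a set set" where
  "Comp V E = {V} \<union> {{v} | v. v \<in> V} \<union> {S \<in> generated E. S \<subset> V}"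

definition basic_sets :: "'a set \<Rightarrow> 'a set set \<Rightarrow> 'a set set" where
  "basic_sets V E = {S \<in> Comp V E. card S > 1 \<and>
      \<not> (\<exists>F. F \<subseteq> {X \<in> Comp V E. X \<subset> S} \<and> connected_union_of F S)}"

end

theory Submission
  imports Defs "HOL-Library.Transitive_Closure_Table"
begin

(*
  Every set of Comp(H) induces a subtree of every host tree of H: intersections of subtrees are
  subtrees (a simple path leaving a subtree and coming back would close a cycle), and connected
  unions of subtrees are subtrees.  Comp(H) is generated from its basic sets by connected unions,
  so a tree hosts H as soon as it hosts the basic sets of H.

  For a host tree T, every edge e of H is the connected union of the sets I_H(uv) over the tree
  edges uv inside e.  Hence if T hosts both H1 and H2 and I_H1, I_H2 agree along T, the edges of
  each hypergraph lie in the Comp of the other, so Comp(H1) = Comp(H2).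

  Conversely, let H1, H2 be equivalent, uv an edge of a common host tree T and w in I_H1(uv), say
  on the side of v in T - uv.  Exchanging uv for uw yields another host tree of H1, hence of H2,
  and in it an edge of H2 containing u and v but not w would be disconnected; so w is in I_H2(uv).
*)

section \<open>Reachability in induced subgraphs\<close>

abbreviation reachable_in :: "'a set set \<Rightarrow> 'a set \<Rightarrow> 'a \<Rightarrow> 'a \<Rightarrow> bool" where
  "reachable_in K S x y \<equiv> (x, y) \<in> (adj_in K S)\<^sup>*"

abbreviation path_in :: "'a set set \<Rightarrow> 'a set \<Rightarrow> 'a \<Rightarrow> 'a list \<Rightarrow> 'a \<Rightarrow> bool" where
  "path_in K S x xs y \<equiv> rtrancl_path (\<lambda>a b. (a, b) \<in> adj_in K S) x xs y"

lemma adj_in_mono: "K \<subseteq> K' \<Longrightarrow> S \<subseteq> S' \<Longrightarrow> adj_in K S \<subseteq> adj_in K' S'"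
  by (auto simp: adj_in_def)

lemma reachable_in_mono:
  "reachable_in K S x y \<Longrightarrow> K \<subseteq> K' \<Longrightarrow> S \<subseteq> S' \<Longrightarrow> reachable_in K' S' x y"
  using rtrancl_mono[OF adj_in_mono] by blast

lemma sym_adj_in: "sym (adj_in K S)"
  by (auto simp: sym_def adj_in_def insert_commute)

lemma reachable_in_sym: "reachable_in K S x y \<Longrightarrow> reachable_in K S y x"
  using sym_rtrancl[OF sym_adj_in] by (rule symD)

lemma reachable_in_edge: "{x, y} \<in> K \<Longrightarrow> x \<in> S \<Longrightarrow> y \<in> S \<Longrightarrow> reachable_in K S x y"
  by (rule r_into_rtrancl) (auto simp: adj_in_def)

lemma reachable_in_closed: "reachable_in K S x y \<Longrightarrow> x \<in> S \<Longrightarrow> y \<in> S"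
  by (induction rule: rtrancl_induct) (auto simp: adj_in_def)

lemma reachable_in_insert_edgeD:
  assumes "reachable_in (insert {a, b} K) S x y"
  shows "reachable_in K S x y
    \<or> reachable_in K S x a \<and> reachable_in K S b y
    \<or> reachable_in K S x b \<and> reachable_in K S a y"
  using assms
proof (induction rule: rtrancl_induct)
  case (step y z)
  then have "y \<in> S" "z \<in> S" "{y, z} = {a, b} \<or> {y, z} \<in> K"
    by (auto simp: adj_in_def)
  then consider "(y, z) \<in> adj_in K S" | "y = a" "z = b" | "y = b" "z = a"
    by (auto simp: adj_in_def doubleton_eq_iff)
  then show ?case
    using step.IH by cases (auto intro: rtrancl_into_rtrancl)
qed simp

lemma reachable_in_iff_path_in: "reachable_in K S x y \<longleftrightarrow> (\<exists>xs. path_in K S x xs y)"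
  by (simp add: rtranclp_eq_rtrancl_path[symmetric] rtranclp_rtrancl_eq)

lemma path_in_subset: "path_in K S x xs y \<Longrightarrow> set xs \<subseteq> S"
  by (induction rule: rtrancl_path.induct) (auto simp: adj_in_def)

lemma reachable_in_if_path_in:
  "path_in K S' x xs y \<Longrightarrow> set (x # xs) \<subseteq> S \<Longrightarrow> reachable_in K S x y"
  by (induction rule: rtrancl_path.induct)
    (auto simp: adj_in_def intro: converse_rtrancl_into_rtrancl)


section \<open>Cycles and trees\<close>

lemma has_cycle_if_reachable_in_without_edge:
  assumes edge: "{x, y} \<in> K" and "x \<noteq> y" and "reachable_in (K - {{x, y}}) S x y"
  shows "has_cycle K"
proof -
  obtain xs where path: "path_in (K - {{x, y}}) S x xs y" and dist: "distinct (x # xs)"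
    using assms(3) rtrancl_path_distinct by (metis reachable_in_iff_path_in)
  let ?cs = "x # xs"
  have "xs \<noteq> []" using path \<open>x \<noteq> y\<close> by (auto elim: rtrancl_path.cases)
  then have last: "last xs = y" using path by (rule rtrancl_path_last[rotated])
  have "length xs \<noteq> 1"
  proof
    assume "length xs = 1"
    then have "xs = [y]" using last by (cases xs) auto
    then show False using path by (auto simp: adj_in_def elim: rtrancl_path.cases)
  qed
  then have len: "length ?cs \<ge> 3" using \<open>xs \<noteq> []\<close> by (cases "length xs") auto
  have "{?cs ! i, ?cs ! ((i + 1) mod length ?cs)} \<in> K" if "i < length ?cs" for i
  proof (cases "i < length xs")
    case True
    then have "(?cs ! i, xs ! i) \<in> adj_in (K - {{x, y}}) S" by (rule rtrancl_path_nth[OF path])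
    then show ?thesis using True by (auto simp: adj_in_def)
  next
    case False
    then have "i = length xs" using that by simp
    then show ?thesis
      using edge last \<open>xs \<noteq> []\<close> by (simp add: last_conv_nth insert_commute)
  qed
  then show ?thesis unfolding has_cycle_def using len dist by blast
qed

lemma reachable_in_without_edge_if_has_cycle:
  assumes "has_cycle K"
  shows "\<exists>x y. {x, y} \<in> K \<and> x \<noteq> y \<and> reachable_in (K - {{x, y}}) (\<Union>K) x y"
proof -
  obtain cs where len: "length cs \<ge> 3" and dist: "distinct cs"
    and cyc: "\<And>i. i < length cs \<Longrightarrow> {cs ! i, cs ! ((i + 1) mod length cs)} \<in> K"
    using assms unfolding has_cycle_def by blast
  define n where "n = length cs"
  have n: "3 \<le> n" using len unfolding n_def .
  define x where "x = cs ! (n - 1)"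
  define y where "y = cs ! 0"
  have "Suc (n - 1) = n" using n by simp
  then have xy: "{x, y} \<in> K" using cyc[of "n - 1"] unfolding x_def y_def n_def by simp
  have ne: "cs ! i \<noteq> cs ! j" if "i < n" "j < n" "i \<noteq> j" for i j
    using dist that unfolding n_def by (simp add: nth_eq_iff_index_eq)
  have "x \<noteq> y" using ne[of "n - 1" 0] n unfolding x_def y_def by simp
  have "reachable_in (K - {{x, y}}) (\<Union>K) y (cs ! j)" if "j < n" for j
    using that
  proof (induction j)
    case (Suc j)
    have edge: "{cs ! j, cs ! Suc j} \<in> K" using cyc[of j] Suc.prems unfolding n_def by simp
    have "cs ! Suc j \<noteq> y" using ne[of "Suc j" 0] Suc.prems unfolding y_def by simp
    moreover have "cs ! j \<noteq> y \<or> cs ! Suc j \<noteq> x"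
      using ne[of j 0] ne[of "Suc j" "n - 1"] Suc.prems n unfolding x_def y_def
      by (cases j) auto
    ultimately have "{cs ! j, cs ! Suc j} \<noteq> {x, y}" by (auto simp: doubleton_eq_iff)
    then have "(cs ! j, cs ! Suc j) \<in> adj_in (K - {{x, y}}) (\<Union>K)"
      using edge by (auto simp: adj_in_def)
    with Suc show ?case by (auto intro: rtrancl_into_rtrancl)
  qed (simp add: y_def)
  then have "reachable_in (K - {{x, y}}) (\<Union>K) x y"
    using n unfolding x_def by (auto intro: reachable_in_sym)
  then show ?thesis using xy \<open>x \<noteq> y\<close> by blast
qed

lemma reachable_in_insert_bridge:
  assumes r: "reachable_in (insert {a, b} K') S x y" and "K' \<subseteq> K"
    and xy: "reachable_in K S x y" and apart: "\<not> reachable_in K S a b"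
  shows "reachable_in K' S x y"
proof -
  have mono: "reachable_in K S p q" if "reachable_in K' S p q" for p q
    using reachable_in_mono[OF that \<open>K' \<subseteq> K\<close> order_refl] .
  from reachable_in_insert_edgeD[OF r] consider "reachable_in K' S x y"
    | "reachable_in K' S x a" "reachable_in K' S b y"
    | "reachable_in K' S x b" "reachable_in K' S a y"
    by blast
  then show ?thesis
  proof cases
    case 2
    have "reachable_in K S a x" "reachable_in K S y b"
      using reachable_in_sym[OF mono[OF 2(1)]] reachable_in_sym[OF mono[OF 2(2)]] .
    then have "reachable_in K S a b" using xy by (meson rtrancl_trans)
    with apart show ?thesis by contradiction
  next
    case 3
    have "reachable_in K S a y" "reachable_in K S x b" using mono[OF 3(2)] mono[OF 3(1)] .
    then have "reachable_in K S a b" using reachable_in_sym[OF xy] by (meson rtrancl_trans)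
    with apart show ?thesis by contradiction
  qed
qed

lemma not_has_cycle_insert_edge:
  assumes "\<Union>K \<subseteq> V" and acyclic: "\<not> has_cycle K" and "a \<in> V" "b \<in> V"
    and apart: "\<not> reachable_in K V a b"
  shows "\<not> has_cycle (insert {a, b} K)"
proof
  assume "has_cycle (insert {a, b} K)"
  from reachable_in_without_edge_if_has_cycle[OF this]
  obtain x y where xy: "{x, y} \<in> insert {a, b} K" "x \<noteq> y"
    and r0: "reachable_in (insert {a, b} K - {{x, y}}) (\<Union>(insert {a, b} K)) x y"
    by blast
  have "\<Union>(insert {a, b} K) \<subseteq> V" using \<open>\<Union>K \<subseteq> V\<close> \<open>a \<in> V\<close> \<open>b \<in> V\<close> by blast
  then have r: "reachable_in (insert {a, b} K - {{x, y}}) V x y"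
    by (rule reachable_in_mono[OF r0 order_refl])
  show False
  proof (cases "{x, y} = {a, b}")
    case True
    then have "insert {a, b} K - {{x, y}} \<subseteq> K" by blast
    then have "reachable_in K V x y" by (rule reachable_in_mono[OF r _ order_refl])
    then have "reachable_in K V a b \<or> reachable_in K V b a" using True by (auto simp: doubleton_eq_iff)
    then show False using apart reachable_in_sym[of b a K V] by blast
  next
    case False
    then have "{x, y} \<in> K" using xy by blast
    then have "reachable_in K V x y" using \<open>\<Union>K \<subseteq> V\<close> by (intro reachable_in_edge) auto
    moreover have "insert {a, b} K - {{x, y}} = insert {a, b} (K - {{x, y}})" using False by blast
    ultimately have "reachable_in (K - {{x, y}}) V x y"
      using reachable_in_insert_bridge[OF _ Diff_subset _ apart] r by simp
    then show False
      using acyclic has_cycle_if_reachable_in_without_edge[OF \<open>{x, y} \<in> K\<close> xy(2)] by blast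
  qed
qed

lemma tree_edgeD:
  assumes "is_tree V T" and "{x, y} \<in> T"
  shows "x \<noteq> y \<and> x \<in> V \<and> y \<in> V"
proof -
  have "T \<subseteq> {{u, v} | u v. u \<in> V \<and> v \<in> V \<and> u \<noteq> v}"
    using assms(1) unfolding is_tree_def by simp
  then obtain u v where "{x, y} = {u, v}" "u \<in> V" "v \<in> V" "u \<noteq> v"
    using assms(2) by blast
  then show ?thesis by (auto simp: doubleton_eq_iff)
qed

lemma tree_Union_subset: "is_tree V T \<Longrightarrow> \<Union>T \<subseteq> V"
  using tree_edgeD unfolding is_tree_def by blast

lemma tree_adj_in_subset: "is_tree V T \<Longrightarrow> adj_in T S \<subseteq> adj_in T V"
  using tree_edgeD by (fastforce simp: adj_in_def)

lemma tree_edge_separates: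
  assumes "is_tree V T" and "{x, y} \<in> T"
  shows "\<not> reachable_in (T - {{x, y}}) V x y"
  using has_cycle_if_reachable_in_without_edge[OF assms(2)] tree_edgeD[OF assms] assms(1)
  unfolding is_tree_def by blast

lemma tree_reachable_from_edge:
  assumes T: "is_tree V T" and "{u, v} \<in> T" and "z \<in> V"
  shows "reachable_in (T - {{u, v}}) V u z \<or> reachable_in (T - {{u, v}}) V v z"
proof -
  have "u \<in> V" using tree_edgeD[OF assms(1,2)] by blast
  then have "reachable_in T V u z" using assms(1,3) unfolding is_tree_def connected_in_def by blast
  moreover have "T = insert {u, v} (T - {{u, v}})" using \<open>{u, v} \<in> T\<close> by blast
  ultimately show ?thesis using reachable_in_insert_edgeD by metis
qed

lemma is_tree_exchange:
  assumes T: "is_tree V T" and e: "{u, v} \<in> T" and vw: "reachable_in (T - {{u, v}}) V v w"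
  shows "is_tree V (insert {u, w} (T - {{u, v}}))"
proof -
  define G where "G = T - {{u, v}}"
  have sep: "\<not> reachable_in G V u v" using tree_edge_separates[OF T e] unfolding G_def .
  have uV: "u \<in> V" "v \<in> V" using tree_edgeD[OF T e] by auto
  have wV: "w \<in> V" using reachable_in_closed[OF vw uV(2)] .
  have wv: "reachable_in G V w v" using reachable_in_sym[OF vw] unfolding G_def .
  have uw_apart: "\<not> reachable_in G V u w" using sep wv by (meson rtrancl_trans)
  then have "u \<noteq> w" by auto
  have "insert {u, w} G \<subseteq> {{a, b} | a b. a \<in> V \<and> b \<in> V \<and> a \<noteq> b}"
    using T uV wV \<open>u \<noteq> w\<close> unfolding is_tree_def G_def by blast
  moreover have "connected_in (insert {u, w} G) V"
  proof -
    have uw: "reachable_in (insert {u, w} G) V u w" using uV wV by (intro reachable_in_edge) auto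
    have "reachable_in (insert {u, w} G) V u z" if "z \<in> V" for z
      using tree_reachable_from_edge[OF T e that] unfolding G_def[symmetric]
    proof
      assume "reachable_in G V u z"
      then show ?thesis by (rule reachable_in_mono[OF _ subset_insertI order_refl])
    next
      assume "reachable_in G V v z"
      then have "reachable_in G V w z" using wv by (rule rtrancl_trans[rotated])
      then have "reachable_in (insert {u, w} G) V w z"
        by (rule reachable_in_mono[OF _ subset_insertI order_refl])
      with uw show ?thesis by (rule rtrancl_trans)
    qed
    then show ?thesis unfolding connected_in_def using uV by (meson reachable_in_sym rtrancl_trans)
  qed
  moreover have "\<not> has_cycle (insert {u, w} G)"
  proof (rule not_has_cycle_insert_edge[OF _ _ uV(1) wV uw_apart])
    show "\<Union>G \<subseteq> V" using tree_Union_subset[OF T] unfolding G_def by blast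
    show "\<not> has_cycle G" using T unfolding is_tree_def has_cycle_def G_def by blast
  qed
  ultimately show ?thesis using T unfolding is_tree_def G_def by blast
qed


section \<open>Connected vertex sets\<close>

lemma tree_path_in_connected:
  assumes T: "is_tree V T" and B: "connected_in T B"
  shows "path_in T V x xs y \<Longrightarrow> distinct (x # xs) \<Longrightarrow> x \<in> B \<Longrightarrow> y \<in> B \<Longrightarrow> set xs \<subseteq> B"
proof (induction rule: rtrancl_path.induct)
  case (step x x' xs y)
  have "x' \<in> B"
  proof (rule ccontr)
    assume "x' \<notin> B"
    have edge: "{x, x'} \<in> T" using step.hyps(1) by (simp add: adj_in_def)
    have "adj_in T B \<subseteq> adj_in (T - {{x, x'}}) V"
      using \<open>x' \<notin> B\<close> tree_adj_in_subset[OF T] by (auto simp: adj_in_def doubleton_eq_iff)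
    moreover have "reachable_in T B x y" using B step.prems(2,3) unfolding connected_in_def by blast
    ultimately have xy: "reachable_in (T - {{x, x'}}) V x y" by (rule rtrancl_mono[THEN subsetD])
    \<comment> \<open>by distinctness the rest of the path avoids x, hence the edge {x, x'}\<close>
    have "set (x' # xs) \<subseteq> V - {x}"
      using step.prems(1) path_in_subset[OF step.hyps(2)] tree_edgeD[OF T edge] by auto
    then have "reachable_in T (V - {x}) x' y" by (rule reachable_in_if_path_in[OF step.hyps(2)])
    moreover have "adj_in T (V - {x}) \<subseteq> adj_in (T - {{x, x'}}) V"
      by (auto simp: adj_in_def doubleton_eq_iff)
    ultimately have "reachable_in (T - {{x, x'}}) V x' y" by (rule rtrancl_mono[THEN subsetD, rotated])
    then have "reachable_in (T - {{x, x'}}) V x x'" by (rule rtrancl_trans[OF xy reachable_in_sym])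
    with tree_edge_separates[OF T edge] show False by contradiction
  qed
  then show ?case using step by simp
qed simp

lemma connected_in_Int:
  assumes T: "is_tree V T" and "connected_in T A" and "connected_in T B"
  shows "connected_in T (A \<inter> B)"
  unfolding connected_in_def
proof (intro ballI)
  fix x y assume x: "x \<in> A \<inter> B" and y: "y \<in> A \<inter> B"
  then have "reachable_in T A x y" using \<open>connected_in T A\<close> unfolding connected_in_def by blast
  then obtain xs where path: "path_in T A x xs y" and "distinct (x # xs)"
    using rtrancl_path_distinct by (metis reachable_in_iff_path_in)
  have "set xs \<subseteq> A" by (rule path_in_subset[OF path])
  moreover have "path_in T V x xs y"
    using path tree_adj_in_subset[OF T] by (auto intro: rtrancl_path_mono)
  then have "set xs \<subseteq> B"
    using tree_path_in_connected[OF T \<open>connected_in T B\<close>] \<open>distinct (x # xs)\<close> x y by blast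
  ultimately show "reachable_in T (A \<inter> B) x y"
    using x by (intro reachable_in_if_path_in[OF path]) auto
qed

lemma connected_in_Union:
  assumes "\<And>X. X \<in> F \<Longrightarrow> connected_in K X" and "int_graph_connected F"
  shows "connected_in K (\<Union>F)"
  unfolding connected_in_def
proof (intro ballI)
  fix x y assume "x \<in> \<Union>F" "y \<in> \<Union>F"
  then obtain A B where AB: "A \<in> F" "B \<in> F" "x \<in> A" "y \<in> B" by blast
  have reach_within: "reachable_in K (\<Union>F) p q" if "X \<in> F" "p \<in> X" "q \<in> X" for X p q
    using assms(1)[OF \<open>X \<in> F\<close>] that unfolding connected_in_def
    by (meson Union_upper order_refl reachable_in_mono)
  have "(A, B) \<in> {(X, Y). X \<in> F \<and> Y \<in> F \<and> X \<inter> Y \<noteq> {}}\<^sup>*"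
    using assms(2) AB unfolding int_graph_connected_def by blast
  then have "\<forall>z\<in>B. reachable_in K (\<Union>F) x z"
  proof (induction rule: rtrancl_induct)
    case base
    then show ?case using reach_within AB by blast
  next
    case (step Y Z)
    then obtain p where "p \<in> Y" "p \<in> Z" "Z \<in> F" by blast
    then show ?case using step.IH reach_within by (meson rtrancl_trans)
  qed
  then show "reachable_in K (\<Union>F) x y" using AB by blast
qed

lemma connected_in_replace_edge:
  assumes conn: "connected_in (insert {a, b} K) S" and "K \<subseteq> K'"
    and ab: "a \<in> S \<Longrightarrow> b \<in> S \<Longrightarrow> reachable_in K' S a b"
  shows "connected_in K' S"
  unfolding connected_in_def
proof (intro ballI)
  fix x y assume "x \<in> S" "y \<in> S"
  then have "reachable_in (insert {a, b} K) S x y" using conn unfolding connected_in_def by blast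
  then consider "reachable_in K S x y"
    | "reachable_in K S x a" "reachable_in K S b y"
    | "reachable_in K S x b" "reachable_in K S a y"
    using reachable_in_insert_edgeD by metis
  then show "reachable_in K' S x y"
  proof cases
    case 1
    then show ?thesis using reachable_in_mono[OF _ \<open>K \<subseteq> K'\<close> order_refl] by blast
  next
    case 2
    have "a \<in> S" "b \<in> S"
      using reachable_in_closed[OF 2(1) \<open>x \<in> S\<close>] reachable_in_closed[OF reachable_in_sym[OF 2(2)] \<open>y \<in> S\<close>] .
    then show ?thesis using 2 ab reachable_in_mono[OF _ \<open>K \<subseteq> K'\<close> order_refl]
      by (meson rtrancl_trans)
  next
    case 3
    have "a \<in> S" "b \<in> S"
      using reachable_in_closed[OF reachable_in_sym[OF 3(2)] \<open>y \<in> S\<close>] reachable_in_closed[OF 3(1) \<open>x \<in> S\<close>] .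
    then show ?thesis using 3 ab reachable_in_mono[OF _ \<open>K \<subseteq> K'\<close> order_refl]
      by (meson reachable_in_sym rtrancl_trans)
  qed
qed


section \<open>The closure Comp\<close>

lemma generated_subset:
  assumes "hypergraph V E"
  shows "S \<in> generated E \<Longrightarrow> S \<subseteq> V"
  by (induction rule: generated.induct)
    (use assms in \<open>auto simp: hypergraph_def connected_union_of_def\<close>)

lemma Comp_subset: "S \<in> Comp V E \<Longrightarrow> S \<subseteq> V"
  unfolding Comp_def by blast

lemma Comp_altdef: "hypergraph V E \<Longrightarrow> Comp V E = insert V ({{v} | v. v \<in> V} \<union> generated E)"
  unfolding Comp_def using generated_subset by blast

lemma edges_subset_Comp: "hypergraph V E \<Longrightarrow> E \<subseteq> Comp V E"
  by (auto simp: Comp_altdef intro: generated.edge)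

lemma Comp_Int:
  assumes "hypergraph V E" and "A \<in> Comp V E" "B \<in> Comp V E" and "A \<inter> B \<noteq> {}"
  shows "A \<inter> B \<in> Comp V E"
  using assms Comp_subset[OF assms(2)] Comp_subset[OF assms(3)]
  by (auto simp: Comp_altdef Int_absorb1 Int_absorb2 intro: generated.inter)

lemma int_graph_connected_non_singletons:
  assumes "int_graph_connected F"
  shows "int_graph_connected {X \<in> F. \<not> is_singleton X}"
  unfolding int_graph_connected_def
proof (intro ballI)
  define F' where "F' = {X \<in> F. \<not> is_singleton X}"
  let ?R = "{(X, Y). X \<in> F \<and> Y \<in> F \<and> X \<inter> Y \<noteq> {}}"
  let ?R' = "{(X, Y). X \<in> F' \<and> Y \<in> F' \<and> X \<inter> Y \<noteq> {}}"
  fix A B assume "A \<in> F'" "B \<in> F'"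
  then have AB: "(A, B) \<in> ?R\<^sup>*" using assms unfolding int_graph_connected_def F'_def by blast
  \<comment> \<open>singletons on the way are swallowed by their predecessor\<close>
  then have "\<exists>Z'\<in>F'. B \<subseteq> Z' \<and> (A, Z') \<in> ?R'\<^sup>*"
  proof (induction rule: rtrancl_induct)
    case base
    then show ?case using \<open>A \<in> F'\<close> by blast
  next
    case (step Z W)
    then obtain Z' where Z': "Z' \<in> F'" "Z \<subseteq> Z'" "(A, Z') \<in> ?R'\<^sup>*" by blast
    show ?case
    proof (cases "W \<in> F'")
      case True
      then have "(Z', W) \<in> ?R'" using Z' step.hyps(2) by blast
      then have "(A, W) \<in> ?R'\<^sup>*" by (rule rtrancl_into_rtrancl[OF Z'(3)])
      then show ?thesis using True by blast
    next
      case False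
      then have "W \<subseteq> Z'" using step.hyps(2) Z'(2) unfolding F'_def is_singleton_def by auto
      then show ?thesis using Z' by blast
    qed
  qed
  then obtain Z' where "Z' \<in> F'" "B \<subseteq> Z'" "(A, Z') \<in> ?R'\<^sup>*" by blast
  moreover have "A = B \<or> B \<noteq> {}" using AB by (cases rule: rtranclE) auto
  ultimately show "(A, B) \<in> ?R'\<^sup>*"
    using \<open>B \<in> F'\<close> unfolding F'_def by (auto intro: rtrancl_into_rtrancl)
qed

lemma rtrancl_step_away: "(x, z) \<in> r\<^sup>* \<Longrightarrow> x \<noteq> z \<Longrightarrow> \<exists>y. (x, y) \<in> r \<and> y \<noteq> x"
  by (induction rule: rtrancl_induct) auto

lemma connected_union_of_non_singletons:
  assumes cu: "connected_union_of F S" and "\<not> is_singleton S"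
  shows "connected_union_of {X \<in> F. \<not> is_singleton X} S"
proof -
  define F' where "F' = {X \<in> F. \<not> is_singleton X}"
  let ?R = "{(X, Y). X \<in> F \<and> Y \<in> F \<and> X \<inter> Y \<noteq> {}}"
  have F: "F \<noteq> {}" "finite F" "\<Union>F = S" "int_graph_connected F"
    using cu unfolding connected_union_of_def by auto
  \<comment> \<open>a singleton {x} of F meets some other member of F, which then contains x\<close>
  have cover: "\<exists>Y\<in>F'. x \<in> Y" if "{x} \<in> F" for x
  proof -
    have "F \<noteq> {{x}}" using F(3) \<open>\<not> is_singleton S\<close> by auto
    then obtain Z where "Z \<in> F" "Z \<noteq> {x}" using \<open>{x} \<in> F\<close> by blast
    then have "({x}, Z) \<in> ?R\<^sup>*" using F(4) \<open>{x} \<in> F\<close> unfolding int_graph_connected_def by blast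
    then have "\<exists>Y. ({x}, Y) \<in> ?R \<and> Y \<noteq> {x}" using \<open>Z \<noteq> {x}\<close> by (intro rtrancl_step_away) auto
    then obtain Y where "({x}, Y) \<in> ?R" "Y \<noteq> {x}" by blast
    then show ?thesis unfolding F'_def is_singleton_def by auto
  qed
  have "\<Union>F' = S" using cover F(3) unfolding F'_def is_singleton_def by blast
  moreover have "F' \<noteq> {}" using F(1) cover unfolding F'_def is_singleton_def by blast
  ultimately show ?thesis
    using F int_graph_connected_non_singletons unfolding connected_union_of_def F'_def by auto
qed

lemma Comp_connected_union:
  assumes hg: "hypergraph V E" and F: "F \<subseteq> Comp V E" and cu: "connected_union_of F S"
  shows "S \<in> Comp V E"
proof -
  have "S \<subseteq> V" using F Comp_subset cu unfolding connected_union_of_def by blast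
  consider "V \<in> F" | "is_singleton S" | "V \<notin> F" "\<not> is_singleton S" by blast
  then show ?thesis
  proof cases
    case 1
    then have "S = V" using \<open>S \<subseteq> V\<close> cu unfolding connected_union_of_def by blast
    then show ?thesis unfolding Comp_def by blast
  next
    case 2
    then show ?thesis using \<open>S \<subseteq> V\<close> unfolding Comp_def is_singleton_def by auto
  next
    case 3
    have "{X \<in> F. \<not> is_singleton X} \<subseteq> generated E"
      using F \<open>V \<notin> F\<close> unfolding Comp_altdef[OF hg] is_singleton_def by blast
    then have "S \<in> generated E"
      using connected_union_of_non_singletons[OF cu 3(2)] by (blast intro: generated.union)
    then show ?thesis unfolding Comp_altdef[OF hg] by blast
  qed
qed

lemma generated_subset_Comp:
  assumes hg: "hypergraph V E" and "E' \<subseteq> Comp V E"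
  shows "generated E' \<subseteq> Comp V E"
proof
  fix S assume "S \<in> generated E'"
  then show "S \<in> Comp V E"
  proof (induction rule: generated.induct)
    case (edge e)
    then show ?case using assms(2) by blast
  next
    case (inter A B)
    then show ?case by (intro Comp_Int[OF hg])
  next
    case (union F S)
    then have "F \<subseteq> Comp V E" by blast
    then show ?case using union.hyps(2) by (rule Comp_connected_union[OF hg])
  qed
qed

lemma Comp_subset_Comp:
  assumes "hypergraph V E" and "E' \<subseteq> Comp V E"
  shows "Comp V E' \<subseteq> Comp V E"
  using generated_subset_Comp[OF assms] unfolding Comp_def by blast

lemma generated_connected_in:
  assumes H: "host_tree V E T"
  shows "S \<in> generated E \<Longrightarrow> connected_in T S"
proof (induction rule: generated.induct)
  case (edge e)
  then show ?case using H unfolding host_tree_def by blast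
next
  case (inter A B)
  then show ?case using connected_in_Int H unfolding host_tree_def by blast
next
  case (union F S)
  then show ?case using connected_in_Union unfolding connected_union_of_def by blast
qed

lemma Comp_connected_in:
  assumes H: "host_tree V E T" and "S \<in> Comp V E"
  shows "connected_in T S"
proof -
  have "connected_in T V" using H unfolding host_tree_def is_tree_def by blast
  moreover have "connected_in T {v}" for v by (simp add: connected_in_def)
  ultimately show ?thesis using assms(2) generated_connected_in[OF H] unfolding Comp_def by blast
qed


section \<open>Edges as connected unions of the sets I_H(uv)\<close>

lemma I_H_subset_edge: "e \<in> E \<Longrightarrow> V' \<subseteq> e \<Longrightarrow> I_H V E V' \<subseteq> e"
  unfolding I_H_def by auto

lemma subset_I_H: "V' \<subseteq> V \<Longrightarrow> V' \<subseteq> I_H V E V'"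
  unfolding I_H_def by auto

lemma I_H_subset: "hypergraph V E \<Longrightarrow> I_H V E V' \<subseteq> V"
  unfolding I_H_def hypergraph_def by auto

lemma not_mem_I_HD: "w \<notin> I_H V E V' \<Longrightarrow> w \<in> V \<Longrightarrow> \<exists>e\<in>E. V' \<subseteq> e \<and> w \<notin> e"
  unfolding I_H_def by (auto split: if_splits)

lemma Inter_mem_generated:
  "finite F \<Longrightarrow> F \<noteq> {} \<Longrightarrow> F \<subseteq> generated E \<Longrightarrow> \<Inter>F \<noteq> {} \<Longrightarrow> \<Inter>F \<in> generated E"
proof (induction F rule: finite_ne_induct)
  case (insert A F)
  then show ?case by (auto intro: generated.inter)
qed simp

lemma I_H_mem_Comp:
  assumes hg: "hypergraph V E" and "V' \<noteq> {}"
  shows "I_H V E V' \<in> Comp V E"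
proof (cases "{e \<in> E. V' \<subseteq> e} = {}")
  case True
  then show ?thesis unfolding I_H_def Comp_def by simp
next
  case False
  have "finite E" using hg unfolding hypergraph_def by (meson Pow_iff finite_Pow_iff finite_subset subsetI)
  then have "\<Inter>{e \<in> E. V' \<subseteq> e} \<in> generated E"
    using False \<open>V' \<noteq> {}\<close> by (intro Inter_mem_generated) (auto intro: generated.edge)
  then show ?thesis using False unfolding I_H_def Comp_altdef[OF hg] by simp
qed

lemma connected_in_edge_exists:
  assumes "connected_in T S" and "\<not> is_singleton S" and "x \<in> S"
  shows "\<exists>z\<in>S. {x, z} \<in> T"
proof -
  obtain y where "y \<in> S" "y \<noteq> x" using assms(2,3) unfolding is_singleton_def by blast
  then have "reachable_in T S x y" using assms(1,3) unfolding connected_in_def by blast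
  then obtain z where "(x, z) \<in> adj_in T S" using \<open>y \<noteq> x\<close> by (blast elim: converse_rtranclE)
  then show ?thesis unfolding adj_in_def by blast
qed

lemma connected_union_of_tree_edge_sets:
  assumes "finite S" and conn: "connected_in T S" and "S \<noteq> {}" and "\<not> is_singleton S"
    and g: "\<And>u v. {u, v} \<in> T \<Longrightarrow> u \<in> S \<Longrightarrow> v \<in> S \<Longrightarrow> {u, v} \<subseteq> g u v \<and> g u v \<subseteq> S"
  shows "connected_union_of {g u v | u v. {u, v} \<in> T \<and> u \<in> S \<and> v \<in> S} S"
proof -
  define F where "F = {g u v | u v. {u, v} \<in> T \<and> u \<in> S \<and> v \<in> S}"
  let ?R = "{(X, Y). X \<in> F \<and> Y \<in> F \<and> X \<inter> Y \<noteq> {}}"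
  have "F \<subseteq> (\<lambda>(u, v). g u v) ` (S \<times> S)" unfolding F_def by auto
  then have "finite F" using \<open>finite S\<close> by (auto intro: finite_subset)
  have "\<Union>F = S"
  proof
    show "\<Union>F \<subseteq> S" using g unfolding F_def by blast
    show "S \<subseteq> \<Union>F"
    proof
      fix x assume "x \<in> S"
      then obtain z where "z \<in> S" "{x, z} \<in> T"
        using connected_in_edge_exists[OF conn \<open>\<not> is_singleton S\<close>] by blast
      then show "x \<in> \<Union>F" using g \<open>x \<in> S\<close> unfolding F_def by blast
    qed
  qed
  moreover have "int_graph_connected F"
    unfolding int_graph_connected_def
  proof (intro ballI)
    fix A B assume "A \<in> F" "B \<in> F"
    then obtain a b c d where A: "A = g a b" "{a, b} \<in> T" "a \<in> S" "b \<in> S"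
      and B: "B = g c d" "{c, d} \<in> T" "c \<in> S" "d \<in> S" unfolding F_def by blast
    have "reachable_in T S a c" using conn A B unfolding connected_in_def by blast
    then have "\<exists>X\<in>F. c \<in> X \<and> (A, X) \<in> ?R\<^sup>*"
    proof (induction rule: rtrancl_induct)
      case base
      then show ?case using \<open>A \<in> F\<close> g A by blast
    next
      case (step y z)
      then obtain X where X: "X \<in> F" "y \<in> X" "(A, X) \<in> ?R\<^sup>*" by blast
      from step.hyps(2) have yz: "{y, z} \<in> T" "y \<in> S" "z \<in> S" by (auto simp: adj_in_def)
      then have "g y z \<in> F" "y \<in> g y z" "z \<in> g y z" using g unfolding F_def by blast+
      then show ?case using X by (blast intro: rtrancl_into_rtrancl)
    qed
    then obtain X where "X \<in> F" "c \<in> X" "(A, X) \<in> ?R\<^sup>*" by blast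
    moreover have "c \<in> B" using g B by blast
    ultimately show "(A, B) \<in> ?R\<^sup>*" using \<open>B \<in> F\<close> by (blast intro: rtrancl_into_rtrancl)
  qed
  moreover have "F \<noteq> {}" using \<open>\<Union>F = S\<close> \<open>S \<noteq> {}\<close> by auto
  ultimately show ?thesis using \<open>finite F\<close> unfolding connected_union_of_def F_def by blast
qed

lemma edge_mem_Comp_if_I_H_eq:
  assumes hg1: "hypergraph V E1" and hg2: "hypergraph V E2" and H: "host_tree V E1 T"
    and I: "\<And>u v. {u, v} \<in> T \<Longrightarrow> I_H V E1 {u, v} = I_H V E2 {u, v}"
    and e: "e \<in> E1"
  shows "e \<in> Comp V E2"
proof (cases "is_singleton e")
  case True
  then obtain x where "e = {x}" unfolding is_singleton_def by blast
  moreover have "e \<subseteq> V" using e hg1 unfolding hypergraph_def by blast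
  ultimately show ?thesis unfolding Comp_def by blast
next
  case False
  have eV: "e \<subseteq> V" "e \<noteq> {}" "finite V" using e hg1 unfolding hypergraph_def by blast+
  let ?F = "{I_H V E2 {u, v} | u v. {u, v} \<in> T \<and> u \<in> e \<and> v \<in> e}"
  have "connected_union_of ?F e"
  proof (rule connected_union_of_tree_edge_sets)
    show "finite e" using eV finite_subset by blast
    show "connected_in T e" using H e unfolding host_tree_def by blast
    show "{u, v} \<subseteq> I_H V E2 {u, v} \<and> I_H V E2 {u, v} \<subseteq> e"
      if "{u, v} \<in> T" "u \<in> e" "v \<in> e" for u v
      using that eV subset_I_H[of "{u, v}" V E2] I_H_subset_edge[OF e, of "{u, v}" V] I[of u v]
      by auto
  qed (use eV False in simp_all)
  moreover have "?F \<subseteq> Comp V E2" by (auto intro!: I_H_mem_Comp[OF hg2])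
  ultimately show ?thesis by (intro Comp_connected_union[OF hg2])
qed

lemma Comp_eq_if_I_H_eq:
  assumes hg1: "hypergraph V E1" and hg2: "hypergraph V E2"
    and H1: "host_tree V E1 T" and H2: "host_tree V E2 T"
    and I: "\<And>u v. {u, v} \<in> T \<Longrightarrow> I_H V E1 {u, v} = I_H V E2 {u, v}"
  shows "Comp V E1 = Comp V E2"
proof
  show "Comp V E1 \<subseteq> Comp V E2"
    using edge_mem_Comp_if_I_H_eq[OF hg1 hg2 H1 I] by (intro Comp_subset_Comp[OF hg2]) blast
  show "Comp V E2 \<subseteq> Comp V E1"
    using edge_mem_Comp_if_I_H_eq[OF hg2 hg1 H2 I[symmetric]] by (intro Comp_subset_Comp[OF hg1]) blast
qed


section \<open>Exchanging a tree edge\<close>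

lemma tree_reachable_in_Diff_edge:
  assumes T: "is_tree V T" and e: "{u, v} \<in> T" and "S \<subseteq> V"
    and r: "reachable_in T S v w" and side: "reachable_in (T - {{u, v}}) V v w"
  shows "reachable_in (T - {{u, v}}) S v w"
proof -
  define G where "G = T - {{u, v}}"
  have sep: "\<not> reachable_in G V u v" using tree_edge_separates[OF T e] unfolding G_def .
  have mono: "reachable_in G V p q" if "reachable_in G S p q" for p q
    using reachable_in_mono[OF that order_refl \<open>S \<subseteq> V\<close>] .
  have "T = insert {u, v} G" using e unfolding G_def by blast
  with r consider "reachable_in G S v w" | "reachable_in G S v u" | "reachable_in G S u w"
    using reachable_in_insert_edgeD by metis
  then show ?thesis
  proof cases
    case 2
    then have "reachable_in G V u v" using reachable_in_sym[OF mono] by blast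
    with sep show ?thesis by contradiction
  next
    case 3
    then have "reachable_in G V u v"
      using rtrancl_trans[OF mono reachable_in_sym[OF side[folded G_def]]] by blast
    with sep show ?thesis by contradiction
  qed (simp add: G_def)
qed

lemma host_tree_exchange:
  assumes hg: "hypergraph V E" and H: "host_tree V E T" and e: "{u, v} \<in> T"
    and vw: "reachable_in (T - {{u, v}}) V v w" and w: "w \<in> I_H V E {u, v}"
  shows "host_tree V E (insert {u, w} (T - {{u, v}}))"
proof -
  define G where "G = T - {{u, v}}"
  have T: "is_tree V T" using H unfolding host_tree_def by blast
  have "connected_in (insert {u, w} G) g" if g: "g \<in> E" for g
  proof (rule connected_in_replace_edge)
    show "connected_in (insert {u, v} G) g"
      using H g e unfolding host_tree_def G_def by (simp add: insert_absorb)
    show "G \<subseteq> insert {u, w} G" by blast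
    assume "u \<in> g" "v \<in> g"
    then have "w \<in> g" using w I_H_subset_edge[OF g, of "{u, v}" V] by blast
    have "g \<subseteq> V" using g hg unfolding hypergraph_def by blast
    have "reachable_in T g v w"
      using H g \<open>v \<in> g\<close> \<open>w \<in> g\<close> unfolding host_tree_def connected_in_def by blast
    then have "reachable_in G g v w"
      unfolding G_def by (rule tree_reachable_in_Diff_edge[OF T e \<open>g \<subseteq> V\<close> _ vw])
    then have "reachable_in (insert {u, w} G) g w v"
      by (rule reachable_in_mono[OF reachable_in_sym subset_insertI order_refl])
    moreover have "reachable_in (insert {u, w} G) g u w"
      using \<open>u \<in> g\<close> \<open>w \<in> g\<close> by (intro reachable_in_edge) auto
    ultimately show "reachable_in (insert {u, w} G) g u v" by (rule rtrancl_trans[rotated])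
  qed
  then show ?thesis
    using is_tree_exchange[OF T e vw] unfolding host_tree_def G_def by blast
qed

lemma mem_I_H_if_exchange_host_tree:
  assumes T: "is_tree V T" and e: "{u, v} \<in> T" and "w \<in> V"
    and H': "host_tree V E (insert {u, w} (T - {{u, v}}))"
  shows "w \<in> I_H V E {u, v}"
proof (rule ccontr)
  define G where "G = T - {{u, v}}"
  assume "w \<notin> I_H V E {u, v}"
  from not_mem_I_HD[OF this \<open>w \<in> V\<close>]
  obtain f where f: "f \<in> E" "{u, v} \<subseteq> f" "w \<notin> f" by blast
  have "connected_in (insert {u, w} G) f" using H' f(1) unfolding host_tree_def G_def by blast
  then have "reachable_in (insert {u, w} G) f u v" using f(2) unfolding connected_in_def by blast
  moreover have "adj_in (insert {u, w} G) f \<subseteq> adj_in G V"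
  proof
    fix p assume "p \<in> adj_in (insert {u, w} G) f"
    then obtain x y where p: "p = (x, y)" "x \<in> f" "y \<in> f" "{x, y} \<in> insert {u, w} G"
      by (auto simp: adj_in_def)
    then have "{x, y} \<in> G" using \<open>w \<notin> f\<close> by (auto simp: doubleton_eq_iff)
    then show "p \<in> adj_in G V" using p tree_edgeD[OF T, of x y] unfolding G_def adj_in_def by blast
  qed
  ultimately have "reachable_in G V u v" by (rule rtrancl_mono[THEN subsetD, rotated])
  with tree_edge_separates[OF T e] show False unfolding G_def by contradiction
qed

lemma I_H_subset_if_host_trees_subset:
  assumes hg: "hypergraph V E1" and sub: "\<And>T'. host_tree V E1 T' \<Longrightarrow> host_tree V E2 T'"
    and H: "host_tree V E1 T" and e: "{u, v} \<in> T"
  shows "I_H V E1 {u, v} \<subseteq> I_H V E2 {u, v}"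
proof
  fix w assume w: "w \<in> I_H V E1 {u, v}"
  have T: "is_tree V T" using H unfolding host_tree_def by blast
  have "w \<in> V" using w I_H_subset[OF hg] by blast
  have exchange: "w \<in> I_H V E2 {a, b}"
    if ab: "{a, b} = {u, v}" and bw: "reachable_in (T - {{a, b}}) V b w" for a b
  proof -
    have "{a, b} \<in> T" "w \<in> I_H V E1 {a, b}" using e w ab by simp_all
    then have "host_tree V E1 (insert {a, w} (T - {{a, b}}))"
      by (intro host_tree_exchange[OF hg H _ bw])
    then have "host_tree V E2 (insert {a, w} (T - {{a, b}}))" by (rule sub)
    then show ?thesis by (rule mem_I_H_if_exchange_host_tree[OF T \<open>{a, b} \<in> T\<close> \<open>w \<in> V\<close>])
  qed
  from tree_reachable_from_edge[OF T e \<open>w \<in> V\<close>] show "w \<in> I_H V E2 {u, v}"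
  proof
    assume "reachable_in (T - {{u, v}}) V u w"
    then show ?thesis using exchange[of v u] by (simp add: insert_commute)
  next
    assume "reachable_in (T - {{u, v}}) V v w"
    then show ?thesis using exchange[of u v] by simp
  qed
qed


section \<open>Basic sets\<close>

lemma connected_in_card_le_one: "finite S \<Longrightarrow> card S \<le> 1 \<Longrightarrow> connected_in T S"
  by (auto simp: connected_in_def card_le_Suc0_iff_eq)

lemma Comp_connected_in_if_basic_sets_connected_in:
  assumes "finite V" and basic: "\<And>B. B \<in> basic_sets V E \<Longrightarrow> connected_in T B"
    and "S \<in> Comp V E"
  shows "connected_in T S"
proof -
  have "finite S" using Comp_subset[OF assms(3)] assms(1) by (rule finite_subset)
  then show ?thesis using \<open>S \<in> Comp V E\<close>
  proof (induction rule: finite_psubset_induct)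
    case (psubset S)
    consider "card S \<le> 1" | "S \<in> basic_sets V E" | "1 < card S" "S \<notin> basic_sets V E"
      by linarith
    then show ?case
    proof cases
      case 1
      then show ?thesis using psubset.hyps by (rule connected_in_card_le_one[rotated])
    next
      case 2
      then show ?thesis by (rule basic)
    next
      case 3
      then obtain F where F: "F \<subseteq> {X \<in> Comp V E. X \<subset> S}" "connected_union_of F S"
        using psubset.prems unfolding basic_sets_def by blast
      then have "connected_in T X" if "X \<in> F" for X
        using that psubset.IH by blast
      then have "connected_in T (\<Union>F)"
        using F(2) unfolding connected_union_of_def by (intro connected_in_Union) blast+
      then show ?thesis using F(2) unfolding connected_union_of_def by simp
    qed
  qed
qed

lemma host_tree_if_basic_sets_subset:
  assumes hg2: "hypergraph V E2" and B: "basic_sets V E2 \<subseteq> basic_sets V E1"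
    and H1: "host_tree V E1 T"
  shows "host_tree V E2 T"
proof -
  have basic: "connected_in T S" if "S \<in> basic_sets V E2" for S
    using that B Comp_connected_in[OF H1] unfolding basic_sets_def by blast
  have "finite V" using hg2 unfolding hypergraph_def by blast
  have "connected_in T e" if "e \<in> E2" for e
    using edges_subset_Comp[OF hg2] that
    by (intro Comp_connected_in_if_basic_sets_connected_in[OF \<open>finite V\<close> basic]) blast+
  then show ?thesis using H1 unfolding host_tree_def by blast
qed

theorem mainTheorem6:
  fixes V :: "'a set" and E1 E2 :: "'a set set"
  assumes "hypertree V E1" and "hypertree V E2"
  shows "(equivalent V E1 E2 \<longleftrightarrow> basic_sets V E1 = basic_sets V E2)
     \<and> (\<forall>T. host_tree V E1 T \<and> host_tree V E2 T \<longrightarrow>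
          (equivalent V E1 E2 \<longleftrightarrow> (\<forall>u v. {u, v} \<in> T \<longrightarrow> I_H V E1 {u, v} = I_H V E2 {u, v})))"
proof -
  have hg1: "hypergraph V E1" and hg2: "hypergraph V E2"
    using assms unfolding hypertree_def by blast+
  obtain T0 where T0: "host_tree V E1 T0" using assms(1) unfolding hypertree_def by blast
  have I_eq: "I_H V E1 {u, v} = I_H V E2 {u, v}"
    if "equivalent V E1 E2" "host_tree V E1 T" "{u, v} \<in> T" for T u v
    using that I_H_subset_if_host_trees_subset[OF hg1, of E2 T]
      I_H_subset_if_host_trees_subset[OF hg2, of E1 T]
    unfolding equivalent_def by blast
  have basic_eq: "basic_sets V E1 = basic_sets V E2"
    if "host_tree V E1 T" "host_tree V E2 T"
      and "\<forall>u v. {u, v} \<in> T \<longrightarrow> I_H V E1 {u, v} = I_H V E2 {u, v}" for T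
    using Comp_eq_if_I_H_eq[OF hg1 hg2 that(1,2)] that(3) unfolding basic_sets_def by simp
  have equiv: "equivalent V E1 E2" if "basic_sets V E1 = basic_sets V E2"
    using that host_tree_if_basic_sets_subset[OF hg1] host_tree_if_basic_sets_subset[OF hg2]
    unfolding equivalent_def by blast
  have "equivalent V E1 E2 \<longleftrightarrow> basic_sets V E1 = basic_sets V E2"
  proof
    assume eqv: "equivalent V E1 E2"
    then have "host_tree V E2 T0" using T0 unfolding equivalent_def by blast
    moreover have "\<forall>u v. {u, v} \<in> T0 \<longrightarrow> I_H V E1 {u, v} = I_H V E2 {u, v}"
      using I_eq[OF eqv T0] by blast
    ultimately show "basic_sets V E1 = basic_sets V E2" by (rule basic_eq[OF T0])
  qed (rule equiv)
  moreover have "equivalent V E1 E2 \<longleftrightarrow> (\<forall>u v. {u, v} \<in> T \<longrightarrow> I_H V E1 {u, v} = I_H V E2 {u, v})"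
    if "host_tree V E1 T" "host_tree V E2 T" for T
    using I_eq[OF _ that(1)] basic_eq[OF that] equiv by blast
  ultimately show ?thesis by blast
qed

end
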